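(* Assume (D1): there are $K:E\to(0,\infty)$ bounded on compact sets and $h:[0,\infty)\to[0,\infty)$ with $\int_0^\infty h(t)dt<\infty$ such that $\|P_t(x,\cdot)-\mu(\cdot)\|_{TV}<K(x)h(t)$ for all $x,t$; and (D2): $\mathbb E^x\{K(X_T)\}<\infty$ for all $x\in E$, $T\ge0$. If $\mu(f)<0$ and the set $L=\{x\in E: f(x)\le\mu(f)\}$ is compact, then the zero-potential $q(x)=\limsup_{T\to\infty}\mathbb E^x\{\int_0^T(f(X_s)-\mu(f))ds\}$ is bounded from below.
   Context: $E$ is a locally compact separable metric space in which every closed ball is compact. $(X_t)$ is a right-continuous time-homogeneous (standard) Markov process on $E$ with laws $\mathbb P^x$, expectations $\mathbb E^x$, transition probabilities $P_t(x,\cdot)$, satisfying the weak Feller property $P_t\mathcal C_0\subseteq\mathcal C_0$ ($\mathcal C_0$ continuous bounded functions vanishing at infinity) and ergodicity (a unique probability measure $\mu$ with $\|P_t(x,\cdot)-\mu\|_{TV}\to0$ for all $x$); $\mu(f)=\int f\,d\mu$. $f:E\to\mathbb R$ is continuous and bounded. *)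

theory Defs
  imports "HOL-Probability.Probability"
begin

definition C0 :: "('a::metric_space \<Rightarrow> real) \<Rightarrow> bool" where
  "C0 g \<longleftrightarrow> continuous_on UNIV g \<and> bounded (range g) \<and>
     (\<forall>e>0. \<exists>C. compact C \<and> (\<forall>x. x \<notin> C \<longrightarrow> \<bar>g x\<bar> < e))"

definition tv_dist :: "'a::topological_space measure \<Rightarrow> 'a measure \<Rightarrow> real" where
  "tv_dist P Q = (SUP A\<in>sets (borel :: 'a measure). \<bar>measure P A - measure Q A\<bar>)"

definition trans :: "('a \<Rightarrow> 'w measure) \<Rightarrow> (real \<Rightarrow> 'w \<Rightarrow> 'a::topological_space)
    \<Rightarrow> real \<Rightarrow> 'a \<Rightarrow> 'a measure" where
  "trans Px X t x = distr (Px x) borel (X t)"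

definition stopT :: "'w measure \<Rightarrow> (real \<Rightarrow> 'w set set) \<Rightarrow> ('w \<Rightarrow> real) \<Rightarrow> bool" where
  "stopT M F \<tau> \<longleftrightarrow> (\<forall>\<omega>\<in>space M. 0 \<le> \<tau> \<omega>) \<and>
     (\<forall>t\<ge>0. {\<omega>\<in>space M. \<tau> \<omega> \<le> t} \<in> F t)"

definition F_at :: "'w measure \<Rightarrow> (real \<Rightarrow> 'w set set) \<Rightarrow> ('w \<Rightarrow> real) \<Rightarrow> 'w set set" where
  "F_at M F \<tau> = {A \<in> sets M. \<forall>t\<ge>0. A \<inter> {\<omega>\<in>space M. \<tau> \<omega> \<le> t} \<in> F t}"

definition hit_trunc :: "(real \<Rightarrow> 'w \<Rightarrow> 'a) \<Rightarrow> 'a set \<Rightarrow> real \<Rightarrow> 'w \<Rightarrow> real" where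
  "hit_trunc X C T \<omega> =
     (if \<exists>t\<in>{0..T}. X t \<omega> \<in> C then Inf {t\<in>{0..T}. X t \<omega> \<in> C} else T)"

text \<open>A standard (right-continuous, normal, strong Markov) process on E with laws P^x,
  defined on the measurable sample space M, adapted to a right-continuous filtration F.\<close>
definition standard_markov ::
  "'w measure \<Rightarrow> ('a::topological_space \<Rightarrow> 'w measure) \<Rightarrow> (real \<Rightarrow> 'w set set)
     \<Rightarrow> (real \<Rightarrow> 'w \<Rightarrow> 'a) \<Rightarrow> bool" where
  "standard_markov M Px F X \<longleftrightarrow>
     (\<forall>x. prob_space (Px x) \<and> sets (Px x) = sets M) \<and>
     (\<forall>t\<ge>0. sigma_algebra (space M) (F t) \<and> F t \<subseteq> sets M) \<and>
     (\<forall>s t. 0 \<le> s \<longrightarrow> s \<le> t \<longrightarrow> F s \<subseteq> F t) \<and>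
     (\<forall>t\<ge>0. F t = (\<Inter>s\<in>{t<..}. F s)) \<and>
     (\<forall>t\<ge>0. \<forall>B\<in>sets borel. {\<omega>\<in>space M. X t \<omega> \<in> B} \<in> F t) \<and>
     (\<forall>\<omega>\<in>space M. \<forall>t\<ge>0. continuous (at_right t) (\<lambda>s. X s \<omega>)) \<and>
     (\<forall>x. AE \<omega> in Px x. X 0 \<omega> = x) \<and>
     (\<forall>t\<ge>0. \<forall>A\<in>sets borel. (\<lambda>x. emeasure (trans Px X t x) A) \<in> borel_measurable borel) \<and>
     (\<forall>C T. closed C \<longrightarrow> 0 \<le> T \<longrightarrow> stopT M F (hit_trunc X C T)) \<and>
     (\<forall>x \<tau> t (g::'a \<Rightarrow> real) A. stopT M F \<tau> \<longrightarrow> 0 \<le> t \<longrightarrow>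
        g \<in> borel_measurable borel \<longrightarrow> bounded (range g) \<longrightarrow> A \<in> F_at M F \<tau> \<longrightarrow>
        (\<integral>\<omega>. indicator A \<omega> * g (X (\<tau> \<omega> + t) \<omega>) \<partial>Px x) =
        (\<integral>\<omega>. indicator A \<omega> * (\<integral>y. g y \<partial>trans Px X t (X (\<tau> \<omega>) \<omega>)) \<partial>Px x))"

definition weak_feller :: "('a::metric_space \<Rightarrow> 'w measure) \<Rightarrow> (real \<Rightarrow> 'w \<Rightarrow> 'a) \<Rightarrow> bool" where
  "weak_feller Px X \<longleftrightarrow>
     (\<forall>t\<ge>0. \<forall>g. C0 g \<longrightarrow> C0 (\<lambda>x. \<integral>y. g y \<partial>trans Px X t x))"

definition ergodic_with ::
  "('a::topological_space \<Rightarrow> 'w measure) \<Rightarrow> (real \<Rightarrow> 'w \<Rightarrow> 'a) \<Rightarrow> 'a measure \<Rightarrow> bool" where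
  "ergodic_with Px X mu \<longleftrightarrow>
     (\<forall>\<nu>. (prob_space \<nu> \<and> sets \<nu> = sets borel \<and>
           (\<forall>x. ((\<lambda>t. tv_dist (trans Px X t x) \<nu>) \<longlongrightarrow> 0) at_top)) \<longleftrightarrow> \<nu> = mu)"

definition zero_potential ::
  "('a::topological_space \<Rightarrow> 'w measure) \<Rightarrow> (real \<Rightarrow> 'w \<Rightarrow> 'a) \<Rightarrow> 'a measure \<Rightarrow> ('a \<Rightarrow> real)
     \<Rightarrow> 'a \<Rightarrow> ereal" where
  "zero_potential Px X mu f x =
     Limsup at_top (\<lambda>T. ereal (\<integral>\<omega>. (LINT s:{0..T}|lborel. f (X s \<omega>) - integral\<^sup>L mu f) \<partial>Px x))"

end

theory Submission
  imports Defs
begin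

text \<open>Write g = f - mu(f) and let tau be the first entrance time of the path into the compact
  set L = {g \<le> 0}, truncated at T. Before tau the integrand g(X_s) is nonnegative, so the integral
  of g(X_s) over [0, T] dominates the integral of g(X_(tau + r)) over r in [0, T - tau]. By the strong
  Markov property the expectation of the latter integrand is that of P_r g (X_tau), where X_tau lies
  in L; since mu(g) = 0, (D1) bounds it below by -2 sup|g| K(X_tau) h(r). As K is bounded on L and h
  is integrable, integrating over r gives a lower bound that is uniform in the starting point and
  in T, and it passes to the limsup.\<close>

lemma layer_cake:
  fixes G :: "'a \<Rightarrow> real"
  assumes P: "prob_space P" and Gm[measurable]: "G \<in> borel_measurable P"
    and Gb: "\<And>y. y \<in> space P \<Longrightarrow> 0 \<le> G y \<and> G y \<le> C"
  shows "(\<integral>y. G y \<partial>P) = (\<integral>t. indicator {0..C} t * measure P {y\<in>space P. t < G y} \<partial>lborel)"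
    and "integrable lborel (\<lambda>t. indicator {0..C} t * measure P {y\<in>space P. t < G y})"
proof -
  interpret prob_space P by fact
  interpret PL: pair_sigma_finite P lborel
    by (simp add: lborel.sigma_finite_measure_axioms pair_sigma_finite.intro sigma_finite_measure_axioms)
  define H where "H y t = (if 0 \<le> t \<and> t \<le> C \<and> t < G y then 1 else 0::real)" for y t
  have Hm: "(\<lambda>(y,t). H y t) \<in> borel_measurable (P \<Otimes>\<^sub>M lborel)"
    unfolding H_def by measurable
  have Hint: "integrable (P \<Otimes>\<^sub>M lborel) (\<lambda>(y,t). H y t)"
  proof (rule integrableI_bounded_set[where A="space P \<times> {0..C}" and B=1])
    show "emeasure (P \<Otimes>\<^sub>M lborel) (space P \<times> {0..C}) < \<infinity>"
      by (subst lborel.emeasure_pair_measure_Times)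
        (auto simp: ennreal_mult_less_top emeasure_space_1 emeasure_lborel_Icc_eq)
  qed (use Hm in \<open>auto intro!: AE_I2 simp: H_def space_pair_measure split: if_splits\<close>)
  have H_lborel: "(\<integral>t. H y t \<partial>lborel) = G y" if y: "y \<in> space P" for y
  proof -
    have "(\<lambda>t. H y t) = indicator {0..<G y}"
      using Gb[OF y] by (auto simp: H_def fun_eq_iff split: split_indicator)
    then show ?thesis using Gb[OF y] by simp
  qed
  have H_P: "(\<integral>y. H y t \<partial>P) = indicator {0..C} t * measure P {y\<in>space P. t < G y}" for t
  proof -
    have "(\<integral>y. H y t \<partial>P) = (\<integral>y. indicator {0..C} t * indicator {y\<in>space P. t < G y} y \<partial>P)"
      by (intro Bochner_Integration.integral_cong) (auto simp: H_def split: split_indicator)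
    then show ?thesis by (simp add: Int_absorb2)
  qed
  have "(\<integral>y. G y \<partial>P) = (\<integral>y. (\<integral>t. H y t \<partial>lborel) \<partial>P)"
    by (intro Bochner_Integration.integral_cong) (auto simp: H_lborel)
  also have "\<dots> = (\<integral>t. (\<integral>y. H y t \<partial>P) \<partial>lborel)"
    using PL.Fubini_integral[OF Hint] by simp
  finally show "(\<integral>y. G y \<partial>P) = (\<integral>t. indicator {0..C} t * measure P {y\<in>space P. t < G y} \<partial>lborel)"
    by (simp add: H_P)
  show "integrable lborel (\<lambda>t. indicator {0..C} t * measure P {y\<in>space P. t < G y})"
    using PL.integrable_snd[OF Hint] by (simp add: H_P)
qed

text \<open>Shifted into [0, 2B], g has layer-cake integrals over [0, 2B] whose integrands are the
  P- and Q-measures of the same superlevel sets, so they differ by at most tv_dist P Q.\<close>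
lemma integral_ge_tv_dist:
  fixes P Q :: "'a::topological_space measure" and g :: "'a \<Rightarrow> real"
  assumes P: "prob_space P" "sets P = sets borel" and Q: "prob_space Q" "sets Q = sets borel"
    and gm: "g \<in> borel_measurable borel" and gb: "\<And>y. \<bar>g y\<bar> \<le> B"
  shows "(\<integral>y. g y \<partial>Q) - 2 * B * tv_dist P Q \<le> (\<integral>y. g y \<partial>P)"
proof -
  have B0: "0 \<le> B" using gb[of undefined] by simp
  define G where "G y = g y + B" for y
  define D where "D R t = indicator {0..2*B} t * measure R {y. t < G y}" for R t
  have Gm: "G \<in> borel_measurable borel" unfolding G_def using gm by simp
  have layer: "(\<integral>y. g y \<partial>R) + B = (\<integral>t. D R t \<partial>lborel) \<and> integrable lborel (D R)"
    if R: "prob_space R" "sets R = sets borel" for R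
  proof -
    interpret R: prob_space R by (fact R(1))
    have space: "space R = UNIV" using sets_eq_imp_space_eq[OF R(2)] by simp
    have GmR: "G \<in> borel_measurable R" and gmR: "g \<in> borel_measurable R"
      using Gm gm by (simp_all add: measurable_cong_sets[OF R(2) refl])
    have "integrable R g" by (rule R.integrable_const_bound[where B=B]) (use gb gmR in auto)
    then have "(\<integral>y. G y \<partial>R) = (\<integral>y. g y \<partial>R) + B" unfolding G_def by (simp add: R.prob_space)
    moreover have "0 \<le> G y \<and> G y \<le> 2 * B" for y using gb[of y] by (auto simp: G_def abs_le_iff)
    ultimately show ?thesis
      using layer_cake[OF R(1) GmR, of "2 * B"] by (simp add: D_def[abs_def] space)
  qed
  have "D Q t - indicator {0..2*B} t * tv_dist P Q \<le> D P t" for t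
  proof -
    have "{y. t < G y} \<in> sets borel" using Gm by measurable
    moreover have "bdd_above ((\<lambda>A. \<bar>measure P A - measure Q A\<bar>) ` sets borel)"
      using prob_space.prob_le_1[OF P(1)] prob_space.prob_le_1[OF Q(1)]
      by (intro bdd_aboveI2[where M=1])
        (smt (verit) measure_nonneg)
    ultimately have "\<bar>measure P {y. t < G y} - measure Q {y. t < G y}\<bar> \<le> tv_dist P Q"
      unfolding tv_dist_def by (rule cSUP_upper)
    then show ?thesis by (auto simp: D_def indicator_def abs_le_iff)
  qed
  then have "(\<integral>t. D Q t - indicator {0..2*B} t * tv_dist P Q \<partial>lborel) \<le> (\<integral>t. D P t \<partial>lborel)"
    using layer[OF Q] layer[OF P]
    by (intro integral_mono integrable_diff integrable_mult_left)
      (auto simp: integrable_real_indicator emeasure_lborel_Icc_eq)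
  moreover have "(\<integral>t. D Q t - indicator {0..2*B} t * tv_dist P Q \<partial>lborel) =
      (\<integral>t. D Q t \<partial>lborel) - 2 * B * tv_dist P Q"
    using layer[OF Q] B0
    by (subst Bochner_Integration.integral_diff) (auto simp: integrable_real_indicator emeasure_lborel_Icc_eq measure_lborel_Icc)
  ultimately show ?thesis using layer[OF P] layer[OF Q] by linarith
qed

lemma integral_minus_mean_eq_0:
  fixes f :: "'a::topological_space \<Rightarrow> real"
  assumes mu: "prob_space mu" "sets mu = sets borel"
    and f: "f \<in> borel_measurable borel" "bounded (range f)"
  shows "(\<integral>y. f y - integral\<^sup>L mu f \<partial>mu) = 0"
proof -
  interpret prob_space mu by (fact mu(1))
  obtain B where "\<And>y. \<bar>f y\<bar> \<le> B" using f(2) unfolding bounded_iff by auto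
  then have "integrable mu f"
    using f(1) by (intro integrable_const_bound[where B=B]) (auto simp: measurable_cong_sets[OF mu(2)])
  then show ?thesis by (simp add: prob_space)
qed

lemma set_integral_shifted_tail_le:
  fixes u :: "real \<Rightarrow> real"
  assumes um[measurable]: "u \<in> borel_measurable lborel" and ub: "\<And>s. \<bar>u s\<bar> \<le> B"
    and a: "0 \<le> a" and u_nonneg: "\<And>s. 0 \<le> s \<Longrightarrow> s < a \<Longrightarrow> 0 \<le> u s"
  shows "(LINT r:{0..T-a}|lborel. u (a + r)) \<le> (LINT s:{0..T}|lborel. u s)"
proof -
  have int: "integrable lborel (\<lambda>s. indicator {c..T} s * u s)" for c
    by (rule integrableI_bounded_set[where A="{c..T}" and B=B])
      (use ub in \<open>auto simp: emeasure_lborel_Icc_eq split: split_indicator\<close>)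
  have "(LINT r:{0..T-a}|lborel. u (a + r)) = (\<integral>r. indicator {a..T} (a + 1 * r) * u (a + 1 * r) \<partial>lborel)"
    unfolding set_lebesgue_integral_def
    by (intro Bochner_Integration.integral_cong) (auto split: split_indicator)
  also have "\<dots> = (\<integral>s. indicator {a..T} s * u s \<partial>lborel)"
    using lborel_integral_real_affine[of 1 "\<lambda>s. indicator {a..T} s * u s" a] by simp
  also have "\<dots> \<le> (\<integral>s. indicator {0..T} s * u s \<partial>lborel)"
    using a u_nonneg by (intro integral_mono int) (auto split: split_indicator)
  finally show ?thesis by (simp add: set_lebesgue_integral_def)
qed

lemma integrable_pair_lborel_bounded_support:
  fixes V :: "'a \<Rightarrow> real \<Rightarrow> real"
  assumes P: "finite_measure P"
    and [measurable]: "(\<lambda>(\<omega>, s). V \<omega> s) \<in> borel_measurable (P \<Otimes>\<^sub>M lborel)"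
    and bound: "\<And>\<omega> s. \<bar>V \<omega> s\<bar> \<le> B" and support: "\<And>\<omega> s. s \<notin> {a..b} \<Longrightarrow> V \<omega> s = 0"
  shows "integrable (P \<Otimes>\<^sub>M lborel) (\<lambda>(\<omega>, s). V \<omega> s)"
proof (rule integrableI_bounded_set[where A="space P \<times> {a..b}" and B=B])
  show "emeasure (P \<Otimes>\<^sub>M lborel) (space P \<times> {a..b}) < \<infinity>"
    using finite_measure.emeasure_finite[OF P, of "space P"]
    by (subst lborel.emeasure_pair_measure_Times)
      (auto simp: ennreal_mult_less_top emeasure_lborel_Icc_eq top.not_eq_extremum)
  show "AE p in P \<Otimes>\<^sub>M lborel. p \<notin> space P \<times> {a..b} \<longrightarrow> (case p of (\<omega>, s) \<Rightarrow> V \<omega> s) = 0"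
    using support by (intro AE_I2) (force simp: space_pair_measure)
qed (use bound in \<open>auto intro!: AE_I2\<close>)

lemma Fubini_integral_lower_bound:
  fixes W :: "'a \<Rightarrow> real \<Rightarrow> real"
  assumes P: "sigma_finite_measure P" and W: "integrable (P \<Otimes>\<^sub>M lborel) (\<lambda>(\<omega>, r). W \<omega> r)"
    and b: "integrable lborel b" "AE r in lborel. b r \<le> (\<integral>\<omega>. W \<omega> r \<partial>P)"
    and \<Phi>: "integrable P \<Phi>" "\<And>\<omega>. \<omega> \<in> space P \<Longrightarrow> (\<integral>r. W \<omega> r \<partial>lborel) \<le> \<Phi> \<omega>"
  shows "(\<integral>r. b r \<partial>lborel) \<le> (\<integral>\<omega>. \<Phi> \<omega> \<partial>P)"
proof -
  interpret pair_sigma_finite P lborel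
    using P by (simp add: lborel.sigma_finite_measure_axioms pair_sigma_finite.intro)
  have "(\<integral>r. b r \<partial>lborel) \<le> (\<integral>r. (\<integral>\<omega>. W \<omega> r \<partial>P) \<partial>lborel)"
    using b integrable_snd[OF W] by (intro integral_mono_AE) auto
  also have "\<dots> = (\<integral>\<omega>. (\<integral>r. W \<omega> r \<partial>lborel) \<partial>P)"
    using Fubini_integral[OF W] by simp
  also have "\<dots> \<le> (\<integral>\<omega>. \<Phi> \<omega> \<partial>P)"
    using integrable_fst'[OF W] \<Phi> by (intro integral_mono) auto
  finally show ?thesis .
qed

lemma set_integral_mono_set_nonneg:
  fixes f :: "'a \<Rightarrow> real"
  assumes "set_integrable M B f" "A \<in> sets M" "A \<subseteq> B" "\<And>x. x \<in> B \<Longrightarrow> 0 \<le> f x"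
  shows "(LINT x:A|M. f x) \<le> (LINT x:B|M. f x)"
  using set_integrable_subset[OF assms(1-3)] assms
  unfolding set_lebesgue_integral_def set_integrable_def
  by (intro integral_mono) (auto split: split_indicator)

lemma filterlim_floor_grid_at_right:
  fixes s :: real
  shows "filterlim (\<lambda>n. (real_of_int \<lfloor>real (Suc n) * s\<rfloor> + 1) / real (Suc n)) (at_right s) sequentially"
proof -
  define up where "up n = (real_of_int \<lfloor>real (Suc n) * s\<rfloor> + 1) / real (Suc n)" for n
  have lo: "s < up n" and hi: "up n \<le> s + inverse (real (Suc n))" for n
  proof -
    have n: "0 < real (Suc n)" by simp
    have "real (Suc n) * s < real_of_int \<lfloor>real (Suc n) * s\<rfloor> + 1"
      by (rule real_of_int_floor_add_one_gt)
    then show "s < up n" using n by (simp add: up_def field_simps)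
    have "real_of_int \<lfloor>real (Suc n) * s\<rfloor> \<le> real (Suc n) * s" by (rule of_int_floor_le)
    then have "up n \<le> (real (Suc n) * s + 1) / real (Suc n)"
      unfolding up_def using n by (intro divide_right_mono) auto
    also have "\<dots> = s + inverse (real (Suc n))" using n by (simp add: field_simps)
    finally show "up n \<le> s + inverse (real (Suc n))" .
  qed
  have "up \<longlonglongrightarrow> s"
  proof (rule tendsto_sandwich[where f="\<lambda>n. s" and h="\<lambda>n. s + inverse (real (Suc n))"])
    show "(\<lambda>n. s + inverse (real (Suc n))) \<longlonglongrightarrow> s"
      using tendsto_add[OF tendsto_const LIMSEQ_inverse_real_of_nat, of s] by simp
  qed (use lo hi in \<open>auto intro: always_eventually less_imp_le\<close>)
  then show ?thesis
    unfolding filterlim_at up_def[symmetric] using lo by (auto intro!: always_eventually)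
qed

text \<open>Times are clamped at 0 since X t is only assumed measurable for t \<ge> 0. The proof
  approximates s from the right by the next point of the grid of mesh 1/(n+1); right-continuity
  of the paths gives convergence.\<close>
lemma measurable_right_continuous_process:
  fixes X :: "real \<Rightarrow> 'w \<Rightarrow> 'a::metric_space" and f :: "'a \<Rightarrow> real"
  assumes Xm: "\<And>t. 0 \<le> t \<Longrightarrow> X t \<in> measurable M borel"
    and rc: "\<And>\<omega> t. \<omega> \<in> space M \<Longrightarrow> 0 \<le> t \<Longrightarrow> continuous (at_right t) (\<lambda>s. X s \<omega>)"
    and fc: "continuous_on UNIV f"
  shows "(\<lambda>(\<omega>, s). f (X (max 0 s) \<omega>)) \<in> borel_measurable (M \<Otimes>\<^sub>M (borel :: real measure))"
proof -
  have fm: "f \<in> borel_measurable borel" using fc by (rule borel_measurable_continuous_onI)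
  define grid where "grid n i = max 0 ((real_of_int i + 1) / real (Suc n))" for n i
  define up where "up n s = grid n \<lfloor>real (Suc n) * max 0 s\<rfloor>" for n s
  show ?thesis
  proof (rule borel_measurable_LIMSEQ_real[where u="\<lambda>n (\<omega>, s). f (X (up n s) \<omega>)"])
    fix n
    show "(\<lambda>(\<omega>, s). f (X (up n s) \<omega>)) \<in> borel_measurable (M \<Otimes>\<^sub>M (borel :: real measure))"
      unfolding up_def case_prod_beta
    proof (rule measurable_compose_countable[where f="\<lambda>i p. f (X (grid n i) (fst p))"])
      fix i :: int
      have "X (grid n i) \<in> measurable M borel" by (rule Xm) (simp add: grid_def)
      then show "(\<lambda>p. f (X (grid n i) (fst p))) \<in> borel_measurable (M \<Otimes>\<^sub>M (borel :: real measure))"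
        using fm by measurable
    qed measurable
  next
    fix p assume p: "p \<in> space (M \<Otimes>\<^sub>M (borel :: real measure))"
    obtain \<omega> s where ps: "p = (\<omega>, s)" by (cases p)
    have \<omega>: "\<omega> \<in> space M" using p ps by (simp add: space_pair_measure)
    define s' where "s' = max 0 s"
    have s'0: "0 \<le> s'" by (simp add: s'_def)
    have "up n s = (real_of_int \<lfloor>real (Suc n) * s'\<rfloor> + 1) / real (Suc n)" for n
      using s'0 by (simp add: up_def grid_def s'_def)
    then have "filterlim (\<lambda>n. up n s) (at_right s') sequentially"
      using filterlim_floor_grid_at_right[of s'] by simp
    moreover have "((\<lambda>t. X t \<omega>) \<longlongrightarrow> X s' \<omega>) (at_right s')"
      using rc[OF \<omega> s'0] by (simp add: continuous_within)
    ultimately have "(\<lambda>n. X (up n s) \<omega>) \<longlonglongrightarrow> X s' \<omega>"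
      by (rule filterlim_compose[rotated])
    moreover have "isCont f (X s' \<omega>)"
      using fc continuous_on_eq_continuous_at open_UNIV by blast
    ultimately have "(\<lambda>n. f (X (up n s) \<omega>)) \<longlonglongrightarrow> f (X s' \<omega>)"
      by (rule isCont_tendsto_compose[rotated])
    then show "(\<lambda>n. case p of (\<omega>, s) \<Rightarrow> f (X (up n s) \<omega>)) \<longlonglongrightarrow> (case p of (\<omega>, s) \<Rightarrow> f (X (max 0 s) \<omega>))"
      by (simp add: ps s'_def)
  qed
qed

section \<open>Truncated first entrance times\<close>

lemma hit_trunc_bounds:
  assumes "0 \<le> T"
  shows "0 \<le> hit_trunc X C T \<omega> \<and> hit_trunc X C T \<omega> \<le> T"
proof (cases "\<exists>t\<in>{0..T}. X t \<omega> \<in> C")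
  case True
  define S where "S = {t\<in>{0..T}. X t \<omega> \<in> C}"
  obtain t where "t \<in> S" using True by (auto simp: S_def)
  moreover have "bdd_below S" unfolding S_def by (rule bdd_belowI[where m=0]) auto
  ultimately have "0 \<le> Inf S \<and> Inf S \<le> T"
    by (auto intro!: cInf_greatest intro: order_trans[OF cInf_lower] simp: S_def)
  then show ?thesis using True by (simp add: hit_trunc_def S_def)
qed (use assms in \<open>auto simp: hit_trunc_def\<close>)

lemma hit_trunc_not_in_before:
  assumes "0 \<le> s" "s < hit_trunc X C T \<omega>"
  shows "X s \<omega> \<notin> C"
proof
  assume sC: "X s \<omega> \<in> C"
  define S where "S = {t\<in>{0..T}. X t \<omega> \<in> C}"
  show False
  proof (cases "\<exists>t\<in>{0..T}. X t \<omega> \<in> C")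
    case True
    then have "s \<le> T" using hit_trunc_bounds[of T X C \<omega>] assms(2) by auto
    then have "s \<in> S" using assms(1) sC by (simp add: S_def)
    moreover have "bdd_below S" unfolding S_def by (rule bdd_belowI[where m=0]) auto
    ultimately have "Inf S \<le> s" by (rule cInf_lower)
    then show False using True assms(2) by (simp add: hit_trunc_def S_def)
  next
    case False
    then show False using assms sC by (auto simp: hit_trunc_def)
  qed
qed

lemma hit_trunc_mem:
  assumes "closed C" "continuous (at_right (hit_trunc X C T \<omega>)) (\<lambda>s. X s \<omega>)"
    and "hit_trunc X C T \<omega> < T"
  shows "X (hit_trunc X C T \<omega>) \<omega> \<in> C"
proof (rule ccontr)
  define S where "S = {t\<in>{0..T}. X t \<omega> \<in> C}"
  have "S \<noteq> {}" and hit: "hit_trunc X C T \<omega> = Inf S"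
    using assms(3) by (auto simp: S_def hit_trunc_def split: if_splits)
  have bdd: "bdd_below S" unfolding S_def by (rule bdd_belowI[where m=0]) auto
  assume "X (hit_trunc X C T \<omega>) \<omega> \<notin> C"
  moreover have "((\<lambda>s. X s \<omega>) \<longlongrightarrow> X (Inf S) \<omega>) (at_right (Inf S))"
    using assms(2) hit by (simp add: continuous_within)
  ultimately have "eventually (\<lambda>s. X s \<omega> \<in> - C) (at_right (Inf S))"
    using assms(1) hit by (intro topological_tendstoD) auto
  then obtain b where b: "Inf S < b" "\<And>s. Inf S < s \<Longrightarrow> s < b \<Longrightarrow> X s \<omega> \<notin> C"
    unfolding eventually_at_right[of "Inf S" "Inf S + 1", OF less_add_one] by auto
  obtain t where t: "t \<in> S" "t < b" using cInf_less_iff[OF \<open>S \<noteq> {}\<close> bdd] b(1) by blast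
  have "Inf S \<le> t" using t(1) bdd by (rule cInf_lower)
  moreover have "t \<noteq> Inf S" using t(1) \<open>X (hit_trunc X C T \<omega>) \<omega> \<notin> C\<close> hit by (auto simp: S_def)
  ultimately show False using b(2)[of t] t by (auto simp: S_def)
qed

lemma set_integral_ge_after_hit_trunc:
  fixes X :: "real \<Rightarrow> 'w \<Rightarrow> 'a" and g :: "'a \<Rightarrow> real"
  assumes [measurable]: "(\<lambda>s. g (X (max 0 s) \<omega>)) \<in> borel_measurable lborel"
    and gb: "\<And>y. \<bar>g y\<bar> \<le> B" and g_nonneg: "\<And>y. y \<notin> L \<Longrightarrow> 0 \<le> g y" and T: "0 \<le> T"
  shows "(LINT r:{0..T - hit_trunc X L T \<omega>}|lborel. g (X (hit_trunc X L T \<omega> + r) \<omega>))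
    \<le> (LINT s:{0..T}|lborel. g (X s \<omega>))"
proof -
  let ?\<tau> = "hit_trunc X L T \<omega>"
  have \<tau>: "0 \<le> ?\<tau>" using hit_trunc_bounds[OF T, of X L \<omega>] by simp
  have "(LINT r:{0..T - ?\<tau>}|lborel. g (X (?\<tau> + r) \<omega>)) =
      (LINT r:{0..T - ?\<tau>}|lborel. g (X (max 0 (?\<tau> + r)) \<omega>))"
    using \<tau> by (intro set_lebesgue_integral_cong) auto
  also have "\<dots> \<le> (LINT s:{0..T}|lborel. g (X (max 0 s) \<omega>))"
    by (rule set_integral_shifted_tail_le[where B=B])
      (use gb g_nonneg[OF hit_trunc_not_in_before] \<tau> in auto)
  also have "\<dots> = (LINT s:{0..T}|lborel. g (X s \<omega>))"
    by (intro set_lebesgue_integral_cong) auto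
  finally show ?thesis .
qed

lemma stopT_borel_measurable:
  assumes "stopT M F \<tau>" and "\<And>t. 0 \<le> t \<Longrightarrow> F t \<subseteq> sets M"
  shows "\<tau> \<in> borel_measurable M"
  unfolding borel_measurable_iff_le
proof
  fix a :: real
  show "{\<omega> \<in> space M. \<tau> \<omega> \<le> a} \<in> sets M"
  proof (cases "0 \<le> a")
    case True
    then show ?thesis using assms unfolding stopT_def by blast
  next
    case False
    then have "{\<omega> \<in> space M. \<tau> \<omega> \<le> a} = {}" using assms(1) unfolding stopT_def by force
    then show ?thesis by (simp only: sets.empty_sets)
  qed
qed

lemma stopT_le_in_F_at:
  assumes "stopT M F \<tau>" and "\<And>t. 0 \<le> t \<Longrightarrow> F t \<subseteq> sets M"
    and "\<And>s t. 0 \<le> s \<Longrightarrow> s \<le> t \<Longrightarrow> F s \<subseteq> F t" and "0 \<le> s"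
  shows "{\<omega>\<in>space M. \<tau> \<omega> \<le> s} \<in> F_at M F \<tau>"
  unfolding F_at_def
proof (intro CollectI conjI allI impI)
  have le: "{\<omega>\<in>space M. \<tau> \<omega> \<le> t} \<in> F t" if "0 \<le> t" for t
    using assms(1) that unfolding stopT_def by blast
  then show "{\<omega>\<in>space M. \<tau> \<omega> \<le> s} \<in> sets M" using assms(2,4) by blast
  fix t :: real assume "0 \<le> t"
  have "{\<omega>\<in>space M. \<tau> \<omega> \<le> s} \<inter> {\<omega>\<in>space M. \<tau> \<omega> \<le> t} = {\<omega>\<in>space M. \<tau> \<omega> \<le> min s t}"
    by auto
  moreover have "F (min s t) \<subseteq> F t" using assms(3,4) \<open>0 \<le> t\<close> by simp
  ultimately show "{\<omega>\<in>space M. \<tau> \<omega> \<le> s} \<inter> {\<omega>\<in>space M. \<tau> \<omega> \<le> t} \<in> F t"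
    using le[of "min s t"] assms(4) \<open>0 \<le> t\<close> by auto
qed

section \<open>Standard Markov processes\<close>

lemma
  assumes "standard_markov M Px F X"
  shows standard_markov_prob_space: "prob_space (Px x)"
    and standard_markov_sets: "sets (Px x) = sets M"
    and standard_markov_filtration_sets: "0 \<le> t \<Longrightarrow> F t \<subseteq> sets M"
    and standard_markov_filtration_mono: "0 \<le> s \<Longrightarrow> s \<le> t \<Longrightarrow> F s \<subseteq> F t"
    and standard_markov_adapted: "0 \<le> t \<Longrightarrow> B \<in> sets borel \<Longrightarrow> {\<omega>\<in>space M. X t \<omega> \<in> B} \<in> F t"
    and standard_markov_right_continuous:
      "\<omega> \<in> space M \<Longrightarrow> 0 \<le> t \<Longrightarrow> continuous (at_right t) (\<lambda>s. X s \<omega>)"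
    and standard_markov_stopT_hit_trunc: "closed C \<Longrightarrow> 0 \<le> T \<Longrightarrow> stopT M F (hit_trunc X C T)"
proof -
  note sm = assms[unfolded standard_markov_def]
  show "prob_space (Px x)" "sets (Px x) = sets M" using sm by meson+
  show "0 \<le> t \<Longrightarrow> F t \<subseteq> sets M" using sm by meson
  show "0 \<le> s \<Longrightarrow> s \<le> t \<Longrightarrow> F s \<subseteq> F t" using sm by meson
  show "0 \<le> t \<Longrightarrow> B \<in> sets borel \<Longrightarrow> {\<omega>\<in>space M. X t \<omega> \<in> B} \<in> F t" using sm by meson
  show "\<omega> \<in> space M \<Longrightarrow> 0 \<le> t \<Longrightarrow> continuous (at_right t) (\<lambda>s. X s \<omega>)" using sm by meson
  show "closed C \<Longrightarrow> 0 \<le> T \<Longrightarrow> stopT M F (hit_trunc X C T)" using sm by meson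
qed

lemma standard_markov_strong_Markov:
  fixes g :: "'a::topological_space \<Rightarrow> real"
  assumes "standard_markov M Px F X" "stopT M F \<tau>" "0 \<le> t"
    and "g \<in> borel_measurable borel" "bounded (range g)" "A \<in> F_at M F \<tau>"
  shows "(\<integral>\<omega>. indicator A \<omega> * g (X (\<tau> \<omega> + t) \<omega>) \<partial>Px x) =
    (\<integral>\<omega>. indicator A \<omega> * (\<integral>y. g y \<partial>trans Px X t (X (\<tau> \<omega>) \<omega>)) \<partial>Px x)"
  using assms(2-) assms(1)[unfolded standard_markov_def] by meson

lemma standard_markov_measurable:
  fixes X :: "real \<Rightarrow> 'w \<Rightarrow> 'a::topological_space"
  assumes "standard_markov M Px F X" "0 \<le> t"
  shows "X t \<in> measurable M borel"
proof (rule measurableI)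
  fix B :: "'a set" assume "B \<in> sets borel"
  then have "{\<omega>\<in>space M. X t \<omega> \<in> B} \<in> sets M"
    using assms standard_markov_adapted standard_markov_filtration_sets by blast
  then show "X t -` B \<inter> space M \<in> sets M" by (simp add: Int_def conj_commute)
qed simp

lemma standard_markov_prob_space_trans:
  assumes "standard_markov M Px F X" "0 \<le> t"
  shows "prob_space (trans Px X t x)"
  unfolding trans_def using assms
  by (intro prob_space.prob_space_distr standard_markov_prob_space)
    (auto simp: measurable_cong_sets[OF standard_markov_sets] standard_markov_measurable)

lemma sets_trans [simp]: "sets (trans Px X t x) = sets borel"
  by (simp add: trans_def)

lemma standard_markov_measurable_hit_trunc:
  assumes "standard_markov M Px F X" "closed L" "0 \<le> T"
  shows "hit_trunc X L T \<in> borel_measurable (Px x)"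
  using stopT_borel_measurable[OF standard_markov_stopT_hit_trunc[OF assms]
      standard_markov_filtration_sets[OF assms(1)]]
  by (simp add: measurable_cong_sets[OF standard_markov_sets[OF assms(1)] refl])

lemma standard_markov_measurable_path:
  fixes X :: "real \<Rightarrow> 'w \<Rightarrow> 'a::metric_space" and g :: "'a \<Rightarrow> real"
  assumes "standard_markov M Px F X" "continuous_on UNIV g"
  shows "(\<lambda>(\<omega>, s). g (X (max 0 s) \<omega>)) \<in> borel_measurable (Px x \<Otimes>\<^sub>M lborel)"
  unfolding measurable_cong_sets[OF sets_pair_measure_cong[OF standard_markov_sets[OF assms(1)] sets_lborel] refl]
  using assms
  by (intro measurable_right_continuous_process standard_markov_measurable standard_markov_right_continuous)

lemma standard_markov_integrable_path_integral:
  fixes X :: "real \<Rightarrow> 'w \<Rightarrow> 'a::metric_space" and g :: "'a \<Rightarrow> real"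
  assumes proc: "standard_markov M Px F X" and gc: "continuous_on UNIV g" and gb: "\<And>y. \<bar>g y\<bar> \<le> B"
  shows "integrable (Px x) (\<lambda>\<omega>. LINT s:{0..T}|lborel. g (X s \<omega>))"
proof -
  interpret prob_space "Px x" using proc by (rule standard_markov_prob_space)
  interpret pair_sigma_finite "Px x" lborel
    by (simp add: lborel.sigma_finite_measure_axioms pair_sigma_finite.intro sigma_finite_measure_axioms)
  have [measurable]: "(\<lambda>(\<omega>, s). g (X (max 0 s) \<omega>)) \<in> borel_measurable (Px x \<Otimes>\<^sub>M lborel)"
    using proc gc by (rule standard_markov_measurable_path)
  have "integrable (Px x \<Otimes>\<^sub>M lborel) (\<lambda>(\<omega>, s). indicator {0..T} s * g (X (max 0 s) \<omega>))"
    using gb order_trans[OF abs_ge_zero gb]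
    by (intro integrable_pair_lborel_bounded_support[where a=0 and b=T and B=B])
      (auto simp: abs_mult split: split_indicator)
  from integrable_fst'[OF this] show ?thesis
    unfolding set_lebesgue_integral_def
    by (auto intro!: Bochner_Integration.integral_cong
        elim!: Bochner_Integration.integrable_cong[THEN iffD1, rotated -1] split: split_indicator)
qed

lemma standard_markov_integrable_tail_integrand:
  fixes X :: "real \<Rightarrow> 'w \<Rightarrow> 'a::metric_space" and g :: "'a \<Rightarrow> real"
  assumes proc: "standard_markov M Px F X" and gc: "continuous_on UNIV g" and gb: "\<And>y. \<bar>g y\<bar> \<le> B"
    and L: "closed L" and T: "0 \<le> T"
  shows "integrable (Px x \<Otimes>\<^sub>M lborel)
    (\<lambda>(\<omega>, r). indicator {0..T - hit_trunc X L T \<omega>} r * g (X (hit_trunc X L T \<omega> + r) \<omega>))"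
proof -
  interpret prob_space "Px x" using proc by (rule standard_markov_prob_space)
  define \<tau> where "\<tau> = hit_trunc X L T"
  have \<tau>_bounds: "0 \<le> \<tau> \<omega> \<and> \<tau> \<omega> \<le> T" for \<omega> unfolding \<tau>_def using T by (rule hit_trunc_bounds)
  have [measurable]: "\<tau> \<in> borel_measurable (Px x)"
    unfolding \<tau>_def using proc L T by (rule standard_markov_measurable_hit_trunc)
  have [measurable]: "(\<lambda>(\<omega>, s). g (X (max 0 s) \<omega>)) \<in> borel_measurable (Px x \<Otimes>\<^sub>M lborel)"
    using proc gc by (rule standard_markov_measurable_path)
  have "indicator {0..T - \<tau> \<omega>} r * g (X (\<tau> \<omega> + r) \<omega>) =
      (if 0 \<le> r \<and> r \<le> T - \<tau> \<omega> then g (X (max 0 (\<tau> \<omega> + r)) \<omega>) else 0)" for \<omega> r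
    using \<tau>_bounds[of \<omega>] by simp
  then have "(\<lambda>(\<omega>, r). indicator {0..T - \<tau> \<omega>} r * g (X (\<tau> \<omega> + r) \<omega>)) \<in> borel_measurable (Px x \<Otimes>\<^sub>M lborel)"
    by simp
  moreover have "indicator {0..T - \<tau> \<omega>} r * g (X (\<tau> \<omega> + r) \<omega>) = 0" if "r \<notin> {0..T}" for \<omega> r
    using that \<tau>_bounds[of \<omega>] by auto
  ultimately show ?thesis unfolding \<tau>_def[symmetric]
    using gb order_trans[OF abs_ge_zero gb]
    by (intro integrable_pair_lborel_bounded_support[where a=0 and b=T and B=B])
      (auto simp: abs_mult split: split_indicator)
qed

lemma expectation_after_hitting_ge:
  fixes Px :: "'a::topological_space \<Rightarrow> 'w measure" and g :: "'a \<Rightarrow> real"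
  assumes proc: "standard_markov M Px F X"
    and mu: "prob_space mu" "sets mu = sets borel"
    and gm: "g \<in> borel_measurable borel" and gb: "\<And>y. \<bar>g y\<bar> \<le> B" and gmu: "(\<integral>y. g y \<partial>mu) = 0"
    and L: "closed L" and tv: "\<And>y. y \<in> L \<Longrightarrow> tv_dist (trans Px X r y) mu \<le> e" and e: "0 \<le> e"
    and r: "0 < r" "r \<le> T"
  shows "- (2 * B * e) \<le> (\<integral>\<omega>. indicator {\<omega>\<in>space M. hit_trunc X L T \<omega> \<le> T - r} \<omega> *
    g (X (hit_trunc X L T \<omega> + r) \<omega>) \<partial>Px x)"
proof -
  define \<tau> where "\<tau> = hit_trunc X L T"
  define A where "A = {\<omega>\<in>space M. \<tau> \<omega> \<le> T - r}"
  define Pg where "Pg y = (\<integral>z. g z \<partial>trans Px X r y)" for y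
  interpret prob_space "Px x" using proc by (rule standard_markov_prob_space)
  have space: "space (Px x) = space M" using standard_markov_sets[OF proc] by (rule sets_eq_imp_space_eq)
  have B: "0 \<le> B" using gb[of undefined] by simp
  have \<tau>: "stopT M F \<tau>" unfolding \<tau>_def using proc L r by (intro standard_markov_stopT_hit_trunc) auto
  have "A \<in> F_at M F \<tau>" unfolding A_def using \<tau> r
    by (intro stopT_le_in_F_at standard_markov_filtration_sets[OF proc]
        standard_markov_filtration_mono[OF proc]) auto
  then have eq: "(\<integral>\<omega>. indicator A \<omega> * g (X (\<tau> \<omega> + r) \<omega>) \<partial>Px x) =
      (\<integral>\<omega>. indicator A \<omega> * Pg (X (\<tau> \<omega>) \<omega>) \<partial>Px x)"
    unfolding Pg_def using r gb
    by (intro standard_markov_strong_Markov[OF proc \<tau>] gm) (auto simp: bounded_iff)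
  have "- (indicator A \<omega> * Pg (X (\<tau> \<omega>) \<omega>)) \<le> 2 * B * e" if \<omega>: "\<omega> \<in> space (Px x)" for \<omega>
  proof (cases "\<omega> \<in> A")
    case True
    then have "\<tau> \<omega> < T" using r unfolding A_def by auto
    moreover have "0 \<le> \<tau> \<omega>" using hit_trunc_bounds[of T X L \<omega>] r by (simp add: \<tau>_def)
    ultimately have "X (\<tau> \<omega>) \<omega> \<in> L"
      unfolding \<tau>_def using \<omega> L space
      by (intro hit_trunc_mem standard_markov_right_continuous[OF proc]) auto
    then have "2 * B * tv_dist (trans Px X r (X (\<tau> \<omega>) \<omega>)) mu \<le> 2 * B * e"
      using tv B by (intro mult_left_mono) auto
    moreover have "(\<integral>y. g y \<partial>mu) - 2 * B * tv_dist (trans Px X r (X (\<tau> \<omega>) \<omega>)) mu \<le> Pg (X (\<tau> \<omega>) \<omega>)"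
      unfolding Pg_def using r
      by (intro integral_ge_tv_dist mu gm gb standard_markov_prob_space_trans[OF proc]) auto
    ultimately show ?thesis using True gmu by simp
  qed (use B e in simp)
  then have "(\<integral>\<omega>. - (indicator A \<omega> * Pg (X (\<tau> \<omega>) \<omega>)) \<partial>Px x) \<le> (\<integral>\<omega>. 2 * B * e \<partial>Px x)"
    using B e by (intro integral_mono') auto
  then show ?thesis using eq by (simp add: \<tau>_def A_def prob_space)
qed

text \<open>At r = 0 the path need not have entered L (when the entrance time is truncated at T), so
  the bound is only claimed for r \<noteq> 0; this is a null set in the integral over r.\<close>
lemma expectation_tail_integrand_ge:
  fixes Px :: "'a::topological_space \<Rightarrow> 'w measure" and g :: "'a \<Rightarrow> real"
  assumes proc: "standard_markov M Px F X"
    and mu: "prob_space mu" "sets mu = sets borel"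
    and gm: "g \<in> borel_measurable borel" and gb: "\<And>y. \<bar>g y\<bar> \<le> B" and gmu: "(\<integral>y. g y \<partial>mu) = 0"
    and L: "closed L"
    and tv: "\<And>y s. y \<in> L \<Longrightarrow> 0 < s \<Longrightarrow> tv_dist (trans Px X s y) mu \<le> C * h s"
    and C: "0 \<le> C" and h_nonneg: "\<And>s. 0 \<le> s \<Longrightarrow> 0 \<le> h s"
    and T: "0 \<le> T" and r: "r \<noteq> 0"
  shows "- (2 * B * C) * (indicator {0..T} r * h r) \<le>
    (\<integral>\<omega>. indicator {0..T - hit_trunc X L T \<omega>} r * g (X (hit_trunc X L T \<omega> + r) \<omega>) \<partial>Px x)"
proof (cases "0 < r \<and> r \<le> T")
  case True
  have "space (Px x) = space M" using standard_markov_sets[OF proc] by (rule sets_eq_imp_space_eq)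
  then have "(\<integral>\<omega>. indicator {0..T - hit_trunc X L T \<omega>} r * g (X (hit_trunc X L T \<omega> + r) \<omega>) \<partial>Px x) =
      (\<integral>\<omega>. indicator {\<omega>\<in>space M. hit_trunc X L T \<omega> \<le> T - r} \<omega> * g (X (hit_trunc X L T \<omega> + r) \<omega>) \<partial>Px x)"
    using True by (intro Bochner_Integration.integral_cong) (auto split: split_indicator)
  moreover have "- (2 * B * (C * h r)) \<le> \<dots>"
    using True C h_nonneg tv by (intro expectation_after_hitting_ge[OF proc mu gm gb gmu L]) auto
  ultimately show ?thesis using True by simp
next
  case False
  then have "r \<notin> {0..T - hit_trunc X L T \<omega>}" for \<omega>
    using r hit_trunc_bounds[OF T, of X L \<omega>] by auto
  then show ?thesis using False r by simp
qed

lemma expectation_path_integral_ge: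
  fixes Px :: "'a::metric_space \<Rightarrow> 'w measure" and X :: "real \<Rightarrow> 'w \<Rightarrow> 'a"
    and g :: "'a \<Rightarrow> real" and h :: "real \<Rightarrow> real"
  assumes proc: "standard_markov M Px F X"
    and mu: "prob_space mu" "sets mu = sets borel"
    and gc: "continuous_on UNIV g" and gb: "\<And>y. \<bar>g y\<bar> \<le> B" and gmu: "(\<integral>y. g y \<partial>mu) = 0"
    and L: "closed L" and g_nonneg: "\<And>y. y \<notin> L \<Longrightarrow> 0 \<le> g y"
    and tv: "\<And>y r. y \<in> L \<Longrightarrow> 0 < r \<Longrightarrow> tv_dist (trans Px X r y) mu \<le> C * h r"
    and C: "0 \<le> C" and h_nonneg: "\<And>r. 0 \<le> r \<Longrightarrow> 0 \<le> h r"
    and h_int: "set_integrable lborel {0..} h"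
    and T: "0 \<le> T"
  shows "- (2 * B * C * (LINT r:{0..}|lborel. h r)) \<le> (\<integral>\<omega>. (LINT s:{0..T}|lborel. g (X s \<omega>)) \<partial>Px x)"
proof -
  define P where "P = Px x"
  interpret prob_space P unfolding P_def using proc by (rule standard_markov_prob_space)
  have B: "0 \<le> B" using gb[of undefined] by simp
  define \<tau> where "\<tau> = hit_trunc X L T"
  define W where "W \<omega> r = indicator {0..T - \<tau> \<omega>} r * g (X (\<tau> \<omega> + r) \<omega>)" for \<omega> r
  have W_int: "integrable (P \<Otimes>\<^sub>M lborel) (\<lambda>(\<omega>, r). W \<omega> r)"
    unfolding W_def \<tau>_def P_def using proc gc gb L T by (rule standard_markov_integrable_tail_integrand)
  have path: "(\<integral>r. W \<omega> r \<partial>lborel) \<le> (LINT s:{0..T}|lborel. g (X s \<omega>))" if "\<omega> \<in> space P" for \<omega>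
  proof -
    have "(\<lambda>(\<omega>, s). g (X (max 0 s) \<omega>)) \<in> borel_measurable (P \<Otimes>\<^sub>M lborel)"
      unfolding P_def using proc gc by (rule standard_markov_measurable_path)
    from measurable_Pair2[OF this that]
    have "(\<lambda>s. g (X (max 0 s) \<omega>)) \<in> borel_measurable lborel" by simp
    then have "(LINT r:{0..T - \<tau> \<omega>}|lborel. g (X (\<tau> \<omega> + r) \<omega>)) \<le> (LINT s:{0..T}|lborel. g (X s \<omega>))"
      unfolding \<tau>_def using gb g_nonneg T by (rule set_integral_ge_after_hit_trunc)
    then show ?thesis by (simp add: W_def set_lebesgue_integral_def)
  qed
  define bound where "bound r = - (2 * B * C) * (indicator {0..T} r * h r)" for r
  have expectation: "bound r \<le> (\<integral>\<omega>. W \<omega> r \<partial>P)" if "r \<noteq> 0" for r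
    unfolding bound_def W_def P_def \<tau>_def
    by (rule expectation_tail_integrand_ge[OF proc mu _ gb gmu L tv C h_nonneg T that])
      (rule borel_measurable_continuous_onI[OF gc])
  have "set_integrable lborel {0..T} h" using h_int by (rule set_integrable_subset) auto
  then have h_int_T: "integrable lborel (\<lambda>r. indicator {0..T} r * h r)"
    by (simp add: set_integrable_def)
  have "(LINT r:{0..T}|lborel. h r) \<le> (LINT r:{0..}|lborel. h r)"
    using h_int h_nonneg by (intro set_integral_mono_set_nonneg) auto
  then have "- (2 * B * C * (LINT r:{0..}|lborel. h r)) \<le> (\<integral>r. bound r \<partial>lborel)"
    using B C by (simp add: bound_def set_lebesgue_integral_def mult_left_mono)
  also have "\<dots> \<le> (\<integral>\<omega>. (LINT s:{0..T}|lborel. g (X s \<omega>)) \<partial>P)"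
    using AE_lborel_singleton[of 0] expectation h_int_T path
      standard_markov_integrable_path_integral[OF proc gc gb]
    by (intro Fubini_integral_lower_bound[OF sigma_finite_measure_axioms W_int])
      (auto simp: bound_def P_def elim!: eventually_mono)
  finally show ?thesis unfolding P_def .
qed

theorem lemma2p20:
  fixes M :: "'w measure"
    and Px :: "'a::{heine_borel,second_countable_topology} \<Rightarrow> 'w measure"
    and F :: "real \<Rightarrow> 'w set set"
    and X :: "real \<Rightarrow> 'w \<Rightarrow> 'a"
    and mu :: "'a measure"
    and f :: "'a \<Rightarrow> real"
    and K :: "'a \<Rightarrow> real"
    and h :: "real \<Rightarrow> real"
  assumes proc: "standard_markov M Px F X"
    and feller: "weak_feller Px X"
    and erg: "ergodic_with Px X mu"
    and f_cont: "continuous_on UNIV f"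
    and f_bdd: "bounded (range f)"
    and K_pos: "\<forall>x. 0 < K x"
    and K_bdd: "\<forall>C. compact C \<longrightarrow> bounded (K ` C)"
    and h_nonneg: "\<forall>t\<ge>0. 0 \<le> h t"
    and h_int: "set_integrable lborel {0..} h"
    and D1: "\<forall>x t. 0 \<le> t \<longrightarrow> tv_dist (trans Px X t x) mu < K x * h t"
    and D2: "\<forall>x T. 0 \<le> T \<longrightarrow> integrable (Px x) (\<lambda>\<omega>. K (X T \<omega>))"
    and neg: "integral\<^sup>L mu f < 0"
    and L_compact: "compact {x. f x \<le> integral\<^sup>L mu f}"
  shows "\<exists>c::real. \<forall>x. ereal c \<le> zero_potential Px X mu f x"
proof -
  define m where "m = integral\<^sup>L mu f"
  have mu: "prob_space mu" "sets mu = sets borel"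
    using erg[unfolded ergodic_with_def, rule_format, of mu] by simp_all
  obtain B where B: "\<And>y. \<bar>f y\<bar> \<le> B" using f_bdd unfolding bounded_iff by auto
  obtain a where a: "\<And>y. f y \<le> m \<Longrightarrow> \<bar>K y\<bar> \<le> a"
    using K_bdd L_compact unfolding bounded_iff m_def by fastforce
  define C where "C = max 0 a"
  have C: "0 \<le> C" "\<And>y. f y \<le> m \<Longrightarrow> K y \<le> C"
    using a by (force simp: C_def)+
  have "- (2 * (B + \<bar>m\<bar>) * C * (LINT r:{0..}|lborel. h r)) \<le>
      (\<integral>\<omega>. (LINT s:{0..T}|lborel. f (X s \<omega>) - m) \<partial>Px x)" if "0 \<le> T" for x T
  proof (rule expectation_path_integral_ge[where L="{y. f y \<le> m}" and B="B + \<bar>m\<bar>" and C=C,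
        OF proc mu _ _ _ _ _ _ C(1) _ h_int that])
    show "(\<integral>y. f y - m \<partial>mu) = 0"
      unfolding m_def using mu f_cont f_bdd
      by (intro integral_minus_mean_eq_0 borel_measurable_continuous_onI)
    show "\<bar>f y - m\<bar> \<le> B + \<bar>m\<bar>" for y using B[of y] abs_triangle_ineq4[of "f y" m] by linarith
    show "tv_dist (trans Px X r y) mu \<le> C * h r" if "y \<in> {y. f y \<le> m}" "0 < r" for y r
    proof -
      have "tv_dist (trans Px X r y) mu < K y * h r" using D1 that(2) by simp
      also have "\<dots> \<le> C * h r" using C(2) that h_nonneg by (intro mult_right_mono) auto
      finally show ?thesis by simp
    qed
    show "continuous_on UNIV (\<lambda>y. f y - m)" using f_cont by (intro continuous_intros)
    show "closed {y. f y \<le> m}" using L_compact by (simp add: m_def compact_imp_closed)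
  qed (use h_nonneg in auto)
  then show ?thesis
    unfolding zero_potential_def m_def[symmetric]
    by (intro exI allI le_Limsup) (auto simp: eventually_at_top_linorder)
qed

end
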